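(* $\mathrm{SLT}_1\subsetneq\mathrm{REG}_5^Z$.
   Context: Strictly locally testable languages: let $V$ be an alphabet and $k\ge1$. For $B,I,E\subseteq V^k$ and $F\subseteq V^{\le k-1}$, $\mathrm{slt}(B,I,E,F)$ is the language over $V$ consisting of all words in $F$ together with all words $a_1\cdots a_n$ ($a_i\in V$, $n\ge k$) with $a_1\cdots a_k\in B$, $a_{j+1}\cdots a_{j+k}\in I$ for all $1\le j\le n-k-1$, and $a_{n-k+1}\cdots a_n\in E$. $\mathrm{SLT}_k$ is the family of languages of this form (strictly locally $k$-testable languages). For a regular language $L\subseteq V^*$, $\mathrm{State}(L)$ is the minimum number of states of a deterministic finite automaton $(V,Z,z_0,F,\delta)$ with total transition function $\delta:Z\times V\to Z$ accepting $L$; $\mathrm{REG}_n^Z=\{L\text{ regular}:\mathrm{State}(L)\le n\}$. *)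

theory Defs
  imports Main
begin

definition alphabet :: "'a set \<Rightarrow> bool" where
  "alphabet V \<longleftrightarrow> finite V \<and> V \<noteq> {}"

text \<open>Strictly locally k-testable language slt(B,I,E,F) over V.
  For a word a_1...a_n (n >= k): prefix of length k in B, the windows
  a_{j+1}...a_{j+k} for 1 <= j <= n-k-1 in I, suffix of length k in E.\<close>
definition slt :: "'a set \<Rightarrow> nat \<Rightarrow> 'a list set \<Rightarrow> 'a list set \<Rightarrow> 'a list set
                    \<Rightarrow> 'a list set \<Rightarrow> 'a list set" where
  "slt V k B I E F = F \<union>
     {w \<in> lists V. k \<le> length w \<and> take k w \<in> B
        \<and> (\<forall>j. 1 \<le> j \<and> j + k + 1 \<le> length w \<longrightarrow> take k (drop j w) \<in> I)
        \<and> drop (length w - k) w \<in> E}"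

definition SLT :: "'a set \<Rightarrow> nat \<Rightarrow> 'a list set set" where
  "SLT V k = {L. \<exists>B I E F.
      B \<subseteq> {w \<in> lists V. length w = k} \<and> I \<subseteq> {w \<in> lists V. length w = k} \<and>
      E \<subseteq> {w \<in> lists V. length w = k} \<and> F \<subseteq> {w \<in> lists V. length w \<le> k - 1} \<and>
      L = slt V k B I E F}"

text \<open>States are taken to be natural numbers (any finite state set
  can be renamed into nat, so this does not affect state counts).\<close>
definition is_dfa :: "'a set \<Rightarrow> nat set \<Rightarrow> nat \<Rightarrow> nat set \<Rightarrow> (nat \<Rightarrow> 'a \<Rightarrow> nat) \<Rightarrow> bool" where
  "is_dfa V Z z0 Fin \<delta> \<longleftrightarrow> finite Z \<and> z0 \<in> Z \<and> Fin \<subseteq> Z \<and>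
     (\<forall>z\<in>Z. \<forall>a\<in>V. \<delta> z a \<in> Z)"

definition dfa_lang :: "'a set \<Rightarrow> nat \<Rightarrow> nat set \<Rightarrow> (nat \<Rightarrow> 'a \<Rightarrow> nat) \<Rightarrow> 'a list set" where
  "dfa_lang V z0 Fin \<delta> = {w \<in> lists V. foldl \<delta> z0 w \<in> Fin}"

definition regular :: "'a set \<Rightarrow> 'a list set \<Rightarrow> bool" where
  "regular V L \<longleftrightarrow> (\<exists>Z z0 Fin \<delta>. is_dfa V Z z0 Fin \<delta> \<and> L = dfa_lang V z0 Fin \<delta>)"

definition State :: "'a set \<Rightarrow> 'a list set \<Rightarrow> nat" where
  "State V L = (LEAST n. \<exists>Z z0 Fin \<delta>. is_dfa V Z z0 Fin \<delta> \<and> card Z = n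
                             \<and> L = dfa_lang V z0 Fin \<delta>)"

definition REG_Z :: "'a set \<Rightarrow> nat \<Rightarrow> 'a list set set" where
  "REG_Z V n = {L. L \<subseteq> lists V \<and> regular V L \<and> State V L \<le> n}"

end

theory Submission
  imports Defs
begin

text \<open>A language in SLT_1 only prescribes which letters may begin a word, occur strictly
  inside it, and end it. Reading a word, a DFA therefore only has to remember whether the last
  letter read may still be followed by another one and whether it may end the word; together with
  the initial state and a sink (which absorbs the case "neither") this gives 5 states.
  The inclusion is strict: a 4-state counting automaton accepts {aa}, whereas an SLT_1 language
  containing aa admits a as first and as last letter and hence contains the word a.\<close>

lemma set_butlast_tl_conv_nth:
  "set (butlast (tl w)) = {w ! j | j. 1 \<le> j \<and> j + 2 \<le> length w}"
proof (intro set_eqI iffI)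
  fix x assume "x \<in> set (butlast (tl w))"
  then obtain i where i: "i < length w - 2" "x = w ! Suc i"
    by (auto simp: in_set_conv_nth nth_butlast nth_tl numeral_2_eq_2)
  have "1 \<le> Suc i" "Suc i + 2 \<le> length w" using i(1) by linarith+
  then show "x \<in> {w ! j | j. 1 \<le> j \<and> j + 2 \<le> length w}" using i(2) by blast
next
  fix x assume "x \<in> {w ! j | j. 1 \<le> j \<and> j + 2 \<le> length w}"
  then obtain j where j: "1 \<le> j" "j + 2 \<le> length w" "x = w ! j" by blast
  have "j - 1 < length (butlast (tl w))" using j(1,2) by simp
  moreover have "butlast (tl w) ! (j - 1) = x" using j by (simp add: nth_butlast nth_tl)
  ultimately show "x \<in> set (butlast (tl w))" by (metis nth_mem)
qed

lemma interior_windows_iff: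
  "(\<forall>j. 1 \<le> j \<and> j + 1 + 1 \<le> length w \<longrightarrow> take 1 (drop j w) \<in> I) \<longleftrightarrow>
   (\<forall>x\<in>set (butlast (tl w)). [x] \<in> I)"
proof -
  have "take 1 (drop j w) = [w ! j]" if "j + 1 + 1 \<le> length w" for j
    using that by (simp add: Cons_nth_drop_Suc[symmetric])
  then have "(\<forall>j. 1 \<le> j \<and> j + 1 + 1 \<le> length w \<longrightarrow> take 1 (drop j w) \<in> I) \<longleftrightarrow>
      (\<forall>j. 1 \<le> j \<and> j + 2 \<le> length w \<longrightarrow> [w ! j] \<in> I)"
    by (simp add: numeral_2_eq_2)
  also have "\<dots> \<longleftrightarrow> (\<forall>x\<in>set (butlast (tl w)). [x] \<in> I)"
    unfolding set_butlast_tl_conv_nth by blast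
  finally show ?thesis .
qed

lemma slt_one_conv:
  "slt V 1 B I E F = F \<union> {w \<in> lists V. w \<noteq> [] \<and> [hd w] \<in> B \<and>
     (\<forall>x\<in>set (butlast (tl w)). [x] \<in> I) \<and> [last w] \<in> E}"
proof -
  have "w \<in> slt V 1 B I E F \<longleftrightarrow> w \<in> F \<or> w \<in> lists V \<and> w \<noteq> [] \<and> [hd w] \<in> B \<and>
     (\<forall>x\<in>set (butlast (tl w)). [x] \<in> I) \<and> [last w] \<in> E" for w
  proof (cases "w = []")
    case True
    then show ?thesis by (simp add: slt_def)
  next
    case False
    have "1 \<le> length w" using False by (cases w) simp_all
    moreover have take: "take 1 w = [hd w]" using False by (cases w) simp_all
    moreover have drop: "drop (length w - 1) w = [last w]"
      using False by (cases w rule: rev_cases) simp_all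
    ultimately show ?thesis
      using False unfolding slt_def interior_windows_iff take drop Un_iff mem_Collect_eq by blast
  qed
  then show ?thesis by (simp only: set_eq_iff Un_iff mem_Collect_eq simp_thms)
qed

lemma SLT_one_double_imp_single:
  assumes "L \<in> SLT V 1" "[a, a] \<in> L"
  shows "[a] \<in> L"
proof -
  obtain B I E F where F: "F \<subseteq> {w \<in> lists V. length w \<le> 0}" and L: "L = slt V 1 B I E F"
    using assms(1) unfolding SLT_def by auto
  have "[a, a] \<notin> F" using F by auto
  then show ?thesis using assms(2) unfolding L slt_one_conv by auto
qed

text \<open>State 0 is initial and 4 is the sink; after a nonempty admissible prefix the state
  records whether its last letter may be followed (c) and whether it may end the word (e).\<close>

definition flag_state :: "bool \<Rightarrow> bool \<Rightarrow> nat" where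
  "flag_state c e = (if c then (if e then 1 else 2) else (if e then 3 else 4))"

definition slt_one_delta :: "'a list set \<Rightarrow> 'a list set \<Rightarrow> 'a list set \<Rightarrow> nat \<Rightarrow> 'a \<Rightarrow> nat" where
  "slt_one_delta B I E q x =
     (if q = 0 then (if [x] \<in> B then flag_state True ([x] \<in> E) else 4)
      else if q \<in> {1, 2} then flag_state ([x] \<in> I) ([x] \<in> E) else 4)"

lemma slt_one_delta_flag_state:
  "slt_one_delta B I E (flag_state c e) x = (if c then flag_state ([x] \<in> I) ([x] \<in> E) else 4)"
  by (simp add: slt_one_delta_def flag_state_def)

lemma foldl_slt_one_delta:
  assumes "u \<noteq> []"
  shows "foldl (slt_one_delta B I E) 0 u =
    (if [hd u] \<in> B \<and> (\<forall>x\<in>set (butlast (tl u)). [x] \<in> I)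
     then flag_state (tl u = [] \<or> [last u] \<in> I) ([last u] \<in> E) else 4)"
  using assms
proof (induction u rule: rev_nonempty_induct)
  case (single x)
  then show ?case by (simp add: slt_one_delta_def)
next
  case (snoc x u)
  have "set (tl u) = insert (last u) (set (butlast (tl u)))" if tl_ne: "tl u \<noteq> []"
  proof -
    obtain v y where tl_u: "tl u = v @ [y]" using tl_ne by (cases "tl u" rule: rev_cases) auto
    then have "last u = y" using tl_ne last_tl[of u] by simp
    then show ?thesis using tl_u by simp
  qed
  then have "(\<forall>y\<in>set (tl u). [y] \<in> I) \<longleftrightarrow>
        (\<forall>y\<in>set (butlast (tl u)). [y] \<in> I) \<and> (tl u = [] \<or> [last u] \<in> I)"
    by (cases "tl u = []") auto
  moreover have "slt_one_delta B I E 4 x = 4" by (simp add: slt_one_delta_def)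
  ultimately have "foldl (slt_one_delta B I E) 0 (u @ [x]) =
    (if [hd u] \<in> B \<and> (\<forall>y\<in>set (tl u). [y] \<in> I) then flag_state ([x] \<in> I) ([x] \<in> E) else 4)"
    using snoc.IH by (simp add: slt_one_delta_flag_state)
  moreover have "hd (u @ [x]) = hd u" "butlast (tl (u @ [x])) = tl u" "tl (u @ [x]) \<noteq> []"
    using snoc.hyps by simp_all
  ultimately show ?case by simp
qed

lemma slt_one_eq_dfa_lang:
  assumes "F \<subseteq> {[]}"
  shows "slt V 1 B I E F =
    dfa_lang V 0 ((if [] \<in> F then {0} else {}) \<union> {1, 3}) (slt_one_delta B I E)"
proof (rule set_eqI)
  fix w
  let ?Fin = "(if [] \<in> F then {0} else {}) \<union> {1, 3 :: nat}"
  have in_dfa_lang: "w \<in> dfa_lang V 0 ?Fin (slt_one_delta B I E) \<longleftrightarrow>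
      w \<in> lists V \<and> foldl (slt_one_delta B I E) 0 w \<in> ?Fin"
    unfolding dfa_lang_def by (rule mem_Collect_eq)
  show "w \<in> slt V 1 B I E F \<longleftrightarrow> w \<in> dfa_lang V 0 ?Fin (slt_one_delta B I E)"
  proof (cases "w = []")
    case True
    then show ?thesis using assms unfolding in_dfa_lang slt_one_conv by auto
  next
    case False
    have "flag_state c e \<in> ?Fin \<longleftrightarrow> e" for c e by (auto simp: flag_state_def)
    then have accept: "foldl (slt_one_delta B I E) 0 w \<in> ?Fin \<longleftrightarrow>
        [hd w] \<in> B \<and> (\<forall>x\<in>set (butlast (tl w)). [x] \<in> I) \<and> [last w] \<in> E"
      by (simp add: foldl_slt_one_delta[OF False])
    show ?thesis using False assms unfolding in_dfa_lang accept slt_one_conv by auto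
  qed
qed

lemma dfa_lang_in_REG_Z:
  assumes "is_dfa V Z z0 Fin \<delta>" "card Z \<le> n"
  shows "dfa_lang V z0 Fin \<delta> \<in> REG_Z V n"
proof -
  have "State V (dfa_lang V z0 Fin \<delta>) \<le> card Z"
    unfolding State_def using assms(1) by (intro Least_le) blast
  then show ?thesis
    using assms unfolding REG_Z_def regular_def dfa_lang_def by auto
qed

lemma SLT_one_subset_REG_Z_5: "SLT V 1 \<subseteq> REG_Z V 5"
proof
  fix L assume "L \<in> SLT V 1"
  then obtain B I E F where F: "F \<subseteq> {w \<in> lists V. length w \<le> 0}"
    and L: "L = slt V 1 B I E F"
    unfolding SLT_def by auto
  then have F: "F \<subseteq> {[]}" by auto
  have "is_dfa V {0..4} 0 ((if [] \<in> F then {0} else {}) \<union> {1, 3}) (slt_one_delta B I E)"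
    unfolding is_dfa_def by (auto simp: slt_one_delta_def flag_state_def)
  then show "L \<in> REG_Z V 5"
    unfolding L slt_one_eq_dfa_lang[OF F] by (rule dfa_lang_in_REG_Z) simp
qed

definition count_delta :: "'a \<Rightarrow> nat \<Rightarrow> nat \<Rightarrow> 'a \<Rightarrow> nat" where
  "count_delta a n q x = (if x = a \<and> q < n then Suc q else Suc n)"

lemma foldl_count_delta:
  "q \<le> Suc n \<Longrightarrow> foldl (count_delta a n) q w =
     (if set w \<subseteq> {a} \<and> q + length w \<le> n then q + length w else Suc n)"
  by (induction w arbitrary: q) (auto simp: count_delta_def)

lemma dfa_lang_count_delta:
  assumes "a \<in> V"
  shows "dfa_lang V 0 {n} (count_delta a n) = {replicate n a}"
proof -
  have "set w \<subseteq> {a} \<and> length w = n \<longleftrightarrow> w = replicate n a" for w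
    by (auto intro: replicate_eqI)
  then show ?thesis
    using assms foldl_count_delta[of 0 n a] unfolding dfa_lang_def by auto
qed

lemma is_dfa_count_delta: "is_dfa V {0..Suc n} 0 {n} (count_delta a n)"
  by (auto simp: is_dfa_def count_delta_def)

theorem mainTheorem7:
  fixes V :: "'a set"
  assumes "alphabet V"
  shows "SLT V 1 \<subset> REG_Z V 5"
proof -
  obtain a where a: "a \<in> V" using assms unfolding alphabet_def by blast
  have "{[a, a]} = dfa_lang V 0 {2} (count_delta a 2)"
    using dfa_lang_count_delta[OF a, of 2] by (simp add: numeral_2_eq_2)
  also have "\<dots> \<in> REG_Z V 5"
    by (rule dfa_lang_in_REG_Z[OF is_dfa_count_delta]) simp
  finally have "{[a, a]} \<in> REG_Z V 5" .
  moreover have "{[a, a]} \<notin> SLT V 1"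
  proof
    assume "{[a, a]} \<in> SLT V 1"
    then have "[a] \<in> {[a, a]}" by (rule SLT_one_double_imp_single) simp
    then show False by simp
  qed
  ultimately show ?thesis using SLT_one_subset_REG_Z_5 by blast
qed

end
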